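(* Let $p$ be a prime, $q$ a power of $p$, $n\ge1$ odd, $m=\frac{q^n+1}{q+1}$, and let $G\le B(Q_\infty)$ be a subgroup. Put $G_0=\pi_d(G)$, $G_1=\pi_a(G)$, $g_0=\#G_0$, $g_1=\#G_1$. Then $G_1=G_0^m=\{d^m: d\in G_0\}$ and $g_1=\frac{g_0}{\gcd(g_0,m)}$.
   Context: Let $\mathcal C_n=\mathbb{F}_{q^{2n}}(x,y,z)$ be the function field defined by $x^q+x=y^{q+1}$ and $z^m=y^{q^2}-y$. Let $B(Q_\infty)$ be the group of automorphisms $[a,b,c,d]$ of $\mathcal C_n$ given by $x\mapsto a^{q+1}x+ab^qy+c$, $y\mapsto ay+b$, $z\mapsto dz$, where $a\in\mathbb{F}_{q^2}^*$, $b,c\in\mathbb{F}_{q^2}$, $c^q+c=b^{q+1}$, $d\in\mathbb{F}_{q^{2n}}$, $d^m=a$; its group law is $[a',b',c',d']\circ[a,b,c,d]=[a'a,ab'+b,a^{q+1}c'+ab^qb'+c,d'd]$. Define the homomorphisms $\pi_d:[a,b,c,d]\mapsto d$ and $\pi_a:[a,b,c,d]\mapsto a$. All $d$ occurring lie in the cyclic group $\mu$ of $(q^n+1)(q-1)$-th roots of unity in $\mathbb{F}_{q^{2n}}^*$. *)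

theory Defs
  imports "HOL-Algebra.Group" "HOL-Computational_Algebra.Primes"
begin

text \<open>Elements [a,b,c,d] of B(Q_infinity) are represented as tuples (a,b,c,d) over the
  field 'a, which plays the role of F_{q^{2n}}.  F_{q^2} is the subfield {x. x^(q^2) = x}.\<close>

definition Fq2 :: "nat \<Rightarrow> 'a::field set" where
  "Fq2 q = {x. x ^ (q^2) = x}"

definition mexp :: "nat \<Rightarrow> nat \<Rightarrow> nat" where
  "mexp q n = (q ^ n + 1) div (q + 1)"

definition Bset :: "nat \<Rightarrow> nat \<Rightarrow> ('a::field \<times> 'a \<times> 'a \<times> 'a) set" where
  "Bset q n = {(a, b, c, d). a \<in> Fq2 q \<and> a \<noteq> 0 \<and> b \<in> Fq2 q \<and> c \<in> Fq2 q \<and>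
      c ^ q + c = b ^ (q + 1) \<and> d ^ (mexp q n) = a}"

definition Bmult :: "nat \<Rightarrow> ('a::field \<times> 'a \<times> 'a \<times> 'a) \<Rightarrow> ('a \<times> 'a \<times> 'a \<times> 'a) \<Rightarrow> ('a \<times> 'a \<times> 'a \<times> 'a)" where
  "Bmult q g h = (case g of (a', b', c', d') \<Rightarrow> case h of (a, b, c, d) \<Rightarrow>
      (a' * a, a * b' + b, a ^ (q + 1) * c' + a * b ^ q * b' + c, d' * d))"

text \<open>The group B(Q_infinity); Bmult q g h is the composition g \<circ> h.\<close>
definition BQ :: "nat \<Rightarrow> nat \<Rightarrow> ('a::field \<times> 'a \<times> 'a \<times> 'a) monoid" where
  "BQ q n = \<lparr>carrier = Bset q n, monoid.mult = Bmult q, one = (1, 0, 0, 1)\<rparr>"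

definition pi_a :: "('a \<times> 'a \<times> 'a \<times> 'a) \<Rightarrow> 'a" where
  "pi_a g = fst g"

definition pi_d :: "('a \<times> 'a \<times> 'a \<times> 'a) \<Rightarrow> 'a" where
  "pi_d g = snd (snd (snd g))"

end

theory Submission
  imports Defs "HOL-Computational_Algebra.Polynomial"
begin

text \<open>Every g = [a,b,c,d] in B(Q_infinity) satisfies a = d^m, so \<pi>_a(G) is the image of the
  finite multiplicative group \<pi>_d(G) \<subseteq> F^* under the endomorphism x \<mapsto> x^m.  In a finite
  subgroup D of the multiplicative group of a field all fibres of x \<mapsto> x^e are cosets of the
  kernel {x \<in> D. x^e = 1}; this kernel coincides with the one for e' = gcd #D e, and for a
  divisor e' of #D it has exactly e' elements: at most e' as roots of X^e' - 1, and at least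
  e' because the image consists of roots of X^(#D/e') - 1.  Hence #(D^m) = #D / gcd #D m.\<close>

lemma card_roots_of_unity_le:
  fixes A :: "'a::field set"
  assumes "e > 0" and "finite A" and "A \<subseteq> {x. x ^ e = 1}"
  shows "card A \<le> e"
proof -
  define p :: "'a poly" where "p = monom 1 e - 1"
  have "degree p \<le> e"
    unfolding p_def by (intro degree_diff_le) (auto simp: degree_monom_le)
  have "coeff p e = 1"
    unfolding p_def using assms by (simp add: coeff_monom)
  hence "p \<noteq> 0" by auto
  have "A \<subseteq> {x. poly p x = 0}"
    using assms unfolding p_def by (auto simp: poly_monom)
  hence "card A \<le> card {x. poly p x = 0}"
    using poly_roots_finite[OF \<open>p \<noteq> 0\<close>] by (intro card_mono)
  with card_poly_roots_bound[OF \<open>p \<noteq> 0\<close>] \<open>degree p \<le> e\<close> show ?thesis by simp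
qed

lemma power_gcd_eq_one:
  fixes x :: "'a::monoid_mult"
  shows "x ^ a = 1 \<Longrightarrow> x ^ b = 1 \<Longrightarrow> x ^ gcd a b = 1"
proof (induction a b rule: gcd_nat_induct)
  case (step a b)
  have "x ^ a = (x ^ b) ^ (a div b) * x ^ (a mod b)"
    by (metis div_mult_mod_eq power_add power_mult mult.commute)
  hence "x ^ (a mod b) = 1" using step.prems by simp
  with step show ?case by (simp add: gcd_non_0_nat)
qed simp

locale finite_mult_subgroup =
  fixes D :: "'a::field set"
  assumes finite: "finite D" and one_mem: "1 \<in> D" and zero_not_mem: "0 \<notin> D"
    and mult_closed: "\<And>x y. x \<in> D \<Longrightarrow> y \<in> D \<Longrightarrow> x * y \<in> D"
begin

definition power_kernel :: "nat \<Rightarrow> 'a set" where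
  "power_kernel e = {x \<in> D. x ^ e = 1}"

lemma nonzero: "x \<in> D \<Longrightarrow> x \<noteq> 0"
  using zero_not_mem by auto

lemma card_pos: "card D > 0"
  using finite one_mem card_gt_0_iff by blast

lemma inj_on_mult_left: "x \<in> D \<Longrightarrow> inj_on (\<lambda>y. x * y) A"
  using nonzero by (auto simp: inj_on_def)

lemma image_mult_left: assumes "x \<in> D" shows "(\<lambda>y. x * y) ` D = D"
proof -
  have "(\<lambda>y. x * y) ` D \<subseteq> D" using mult_closed assms by auto
  moreover have "card ((\<lambda>y. x * y) ` D) = card D"
    using card_image[OF inj_on_mult_left[OF assms]] .
  ultimately show ?thesis using finite by (metis card_subset_eq)
qed

lemma inverse_mem: "x \<in> D \<Longrightarrow> \<exists>y\<in>D. x * y = 1"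
  using image_mult_left one_mem by (metis imageE)

lemma power_card_eq_one: assumes "x \<in> D" shows "x ^ card D = 1"
proof -
  have "prod id D = prod id ((\<lambda>y. x * y) ` D)" using image_mult_left[OF assms] by simp
  also have "\<dots> = prod (\<lambda>y. x * y) D" using prod.reindex[OF inj_on_mult_left[OF assms]] by simp
  also have "\<dots> = x ^ card D * prod id D" by (simp add: prod.distrib)
  finally have "x ^ card D * prod id D = 1 * prod id D" by simp
  moreover have "prod id D \<noteq> 0" using finite zero_not_mem by (simp add: prod_zero_iff)
  ultimately show ?thesis by simp
qed

lemma power_fibre_eq: assumes "x0 \<in> D"
  shows "{x \<in> D. x ^ e = x0 ^ e} = (\<lambda>k. x0 * k) ` power_kernel e"
proof
  obtain y where y: "y \<in> D" "x0 * y = 1" using inverse_mem[OF assms] by blast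
  show "{x \<in> D. x ^ e = x0 ^ e} \<subseteq> (\<lambda>k. x0 * k) ` power_kernel e"
  proof
    fix x assume x: "x \<in> {x \<in> D. x ^ e = x0 ^ e}"
    have "(y * x) ^ e = (x0 * y) ^ e" using x by (simp add: power_mult_distrib mult.commute)
    hence "y * x \<in> power_kernel e" using x y mult_closed by (simp add: power_kernel_def)
    moreover have "x = x0 * (y * x)" using y by (simp add: mult.assoc[symmetric])
    ultimately show "x \<in> (\<lambda>k. x0 * k) ` power_kernel e" by blast
  qed
  show "(\<lambda>k. x0 * k) ` power_kernel e \<subseteq> {x \<in> D. x ^ e = x0 ^ e}"
    using mult_closed assms by (auto simp: power_kernel_def power_mult_distrib)
qed

lemma card_power_fibre: "x0 \<in> D \<Longrightarrow> card {x \<in> D. x ^ e = x0 ^ e} = card (power_kernel e)"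
  by (simp add: power_fibre_eq card_image inj_on_mult_left)

lemma card_eq_card_power_image_mult: "card D = card ((\<lambda>x. x ^ e) ` D) * card (power_kernel e)"
proof -
  have "card D = (\<Sum>z\<in>(\<lambda>x. x ^ e) ` D. card {x \<in> D. x ^ e = z})"
    using sum.image_gen[OF finite, of "\<lambda>_. 1::nat" "\<lambda>x. x ^ e"] by simp
  also have "\<dots> = (\<Sum>z\<in>(\<lambda>x. x ^ e) ` D. card (power_kernel e))"
    by (rule sum.cong) (auto simp: card_power_fibre)
  finally show ?thesis by simp
qed

lemma card_power_kernel_dvd: assumes "e dvd card D" shows "card (power_kernel e) = e"
proof -
  obtain f where f: "card D = e * f" using assms by blast
  have "e > 0" "f > 0" using f card_pos by auto
  have "card (power_kernel e) \<le> e"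
    using finite by (intro card_roots_of_unity_le[OF \<open>e > 0\<close>]) (auto simp: power_kernel_def)
  moreover have "card ((\<lambda>x. x ^ e) ` D) \<le> f"
  proof (rule card_roots_of_unity_le[OF \<open>f > 0\<close>])
    show "(\<lambda>x. x ^ e) ` D \<subseteq> {y. y ^ f = 1}"
      using power_card_eq_one by (auto simp: f power_mult[symmetric])
  qed (use finite in simp)
  hence "e * f \<le> f * card (power_kernel e)"
    using card_eq_card_power_image_mult[of e] f by simp
  hence "e \<le> card (power_kernel e)" using \<open>f > 0\<close> by (simp add: mult.commute)
  ultimately show ?thesis by simp
qed

lemma power_kernel_gcd: "power_kernel m = power_kernel (gcd (card D) m)"
proof -
  have "x ^ m = 1 \<longleftrightarrow> x ^ gcd (card D) m = 1" if "x \<in> D" for x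
  proof
    assume "x ^ m = 1"
    thus "x ^ gcd (card D) m = 1" using power_gcd_eq_one power_card_eq_one[OF that] by blast
  next
    assume "x ^ gcd (card D) m = 1"
    moreover obtain t where "m = gcd (card D) m * t" by (meson gcd_dvd2 dvdE)
    ultimately show "x ^ m = 1" by (metis power_mult power_one)
  qed
  thus ?thesis unfolding power_kernel_def by auto
qed

lemma card_power_image: "card ((\<lambda>x. x ^ m) ` D) = card D div gcd (card D) m"
proof -
  have "card (power_kernel m) = gcd (card D) m"
    by (simp add: power_kernel_gcd[of m] card_power_kernel_dvd)
  moreover have "gcd (card D) m > 0" using card_pos by simp
  ultimately show ?thesis using card_eq_card_power_image_mult[of m] by simp
qed

end

lemma mexp_pos: "q > 0 \<Longrightarrow> n \<ge> 1 \<Longrightarrow> mexp q n > 0"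
  using power_increasing[of 1 n q] by (simp add: mexp_def div_greater_zero_iff)

lemma pi_a_eq_power_pi_d: "g \<in> Bset q n \<Longrightarrow> pi_a g = pi_d g ^ mexp q n"
  by (cases g) (simp add: Bset_def pi_a_def pi_d_def)

lemma pi_a_nonzero: "g \<in> Bset q n \<Longrightarrow> pi_a g \<noteq> 0"
  by (cases g) (simp add: Bset_def pi_a_def)

lemma pi_d_Bmult: "pi_d (Bmult q g h) = pi_d g * pi_d h"
  by (cases g; cases h) (simp add: Bmult_def pi_d_def)

lemma finite_mult_subgroup_pi_d:
  assumes "subgroup G (BQ q n)" and "finite G" and "mexp q n > 0"
  shows "finite_mult_subgroup (pi_d ` G)"
proof
  show "finite (pi_d ` G)" using assms(2) by simp
  have "(1, 0, 0, 1) \<in> G" using subgroup.one_closed[OF assms(1)] by (simp add: BQ_def)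
  thus "1 \<in> pi_d ` G" by (force simp: pi_d_def)
  have "G \<subseteq> Bset q n" using subgroup.subset[OF assms(1)] by (simp add: BQ_def)
  thus "0 \<notin> pi_d ` G"
    using pi_a_eq_power_pi_d pi_a_nonzero assms(3) by fastforce
next
  fix x y assume "x \<in> pi_d ` G" "y \<in> pi_d ` G"
  then obtain g h where "g \<in> G" "h \<in> G" "x = pi_d g" "y = pi_d h" by blast
  moreover have "Bmult q g h \<in> G"
    using subgroup.m_closed[OF assms(1) \<open>g \<in> G\<close> \<open>h \<in> G\<close>] by (simp add: BQ_def)
  ultimately show "x * y \<in> pi_d ` G" by (metis pi_d_Bmult image_eqI)
qed

theorem lemma3p3:
  fixes p q n k :: nat and G :: "('a::{field,finite} \<times> 'a \<times> 'a \<times> 'a) set"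
  assumes "prime p" and "k \<ge> 1" and "q = p ^ k"
    and "n \<ge> 1" and "odd n"
    and "card (UNIV :: 'a set) = q ^ (2 * n)"
    and "subgroup G (BQ q n)"
  shows "pi_a ` G = (\<lambda>d. d ^ mexp q n) ` (pi_d ` G)
    \<and> card (pi_a ` G) = card (pi_d ` G) div gcd (card (pi_d ` G)) (mexp q n)"
proof -
  have "q > 0" using assms(1,3) by (simp add: prime_gt_0_nat)
  hence m_pos: "mexp q n > 0" using mexp_pos assms(4) by blast
  have "G \<subseteq> Bset q n" using subgroup.subset[OF assms(7)] by (simp add: BQ_def)
  hence image_eq: "pi_a ` G = (\<lambda>d. d ^ mexp q n) ` (pi_d ` G)"
    unfolding image_comp by (intro image_cong) (auto simp: pi_a_eq_power_pi_d)
  have "finite_mult_subgroup (pi_d ` G)"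
    using finite_mult_subgroup_pi_d[OF assms(7) _ m_pos] by simp
  from finite_mult_subgroup.card_power_image[OF this] image_eq show ?thesis by simp
qed

end
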